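(* Let $\boldsymbol{A}\in\mathbb{R}^{n\times m}$ have full column rank and rows $\boldsymbol{a}_1,\dots,\boldsymbol{a}_n$. Let $\boldsymbol{b}\in\mathbb{R}^n$ (a vector, not to be confused with the batch size $b$), and let $\boldsymbol{x}_*=\arg\min_{\boldsymbol{x}}\frac12\|\boldsymbol{A}\boldsymbol{x}-\boldsymbol{b}\|_2^2$. Let the batch size $b$ divide $n$, let $d=n/b$, and let $\tau_1,\dots,\tau_d$ be a partition of $\{1,\dots,n\}$ into sets of size $b$. Let $\boldsymbol{A}_{\tau_i}$ and $\boldsymbol{b}_{\tau_i}$ denote the rows of $\boldsymbol{A}$ and the entries of $\boldsymbol{b}$ indexed by $\tau_i$. Let $\|\cdot\|$ be the spectral norm and $\sigma_{\min}(\boldsymbol{A})$ the smallest singular value of $\boldsymbol{A}$. Define $$p(\tau_i)=\frac{b}{2n}+\frac12\cdot\frac{\|\boldsymbol{A}_{\tau_i}\|^2}{\sum_{j=1}^d\|\boldsymbol{A}_{\tau_j}\|^2}.$$ Fix $\varepsilon>0$ and $\boldsymbol{x}_0$, and let $\varepsilon_0=\|\boldsymbol{x}_0-\boldsymbol{x}_*\|_2^2$. Consider the iteration $$\boldsymbol{x}_{k+1}=\boldsymbol{x}_k-\frac{\gamma}{p(\tau_{i_k})}\sum_{j\in\tau_{i_k}}(\langle\boldsymbol{a}_j,\boldsymbol{x}_k\rangle-b_j)\boldsymbol{a}_j,$$ with batches drawn i.i.d. from $p$ and step size $$\gamma=\frac{\frac14\varepsilon}{\varepsilon\sum_{i=1}^d\|\boldsymbol{A}_{\tau_i}\|^2+d\,\sigma_{\min}^{-2}(\boldsymbol{A})\sum_{i=1}^d\|\boldsymbol{A}_{\tau_i}\|^2\|\boldsymbol{A}_{\tau_i}\boldsymbol{x}_*-\boldsymbol{b}_{\tau_i}\|_2^2}.$$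 Then after $$k=\Big\lceil4\log(2\varepsilon_0/\varepsilon)\Big(\sigma_{\min}^{-2}(\boldsymbol{A})\sum_{i=1}^d\|\boldsymbol{A}_{\tau_i}\|^2+\frac{d\,\sigma_{\min}^{-4}(\boldsymbol{A})\sum_{i=1}^d\|\boldsymbol{A}_{\tau_i}\|^2\|\boldsymbol{A}_{\tau_i}\boldsymbol{x}_*-\boldsymbol{b}_{\tau_i}\|_2^2}{\varepsilon}\Big)\Big\rceil$$ iterations one has $\mathbb{E}^{(p)}\|\boldsymbol{x}_k-\boldsymbol{x}_*\|_2^2\le\varepsilon$.
   Context: $\mathbb{E}^{(p)}$ denotes expectation over the batch indices drawn independently at each iteration according to $p$. *)

theory Defs
  imports "HOL-Analysis.Analysis"
begin

text \<open>Rows of A are A $ j (j :: 'n), columns indexed by 'm.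
  The submatrix A_T (rows indexed by T) is represented by A with the rows outside T
  replaced by zero; this does not change its spectral norm.\<close>

definition block_map :: "real^'m^'n \<Rightarrow> 'n set \<Rightarrow> real^'m \<Rightarrow> real^'n" where
  "block_map A T x = (\<chi> j. if j \<in> T then (A $ j) \<bullet> x else 0)"

definition block_norm :: "real^'m^'n \<Rightarrow> 'n set \<Rightarrow> real" where
  "block_norm A T = onorm (block_map A T)"

definition block_res_sq :: "real^'m^'n \<Rightarrow> real^'n \<Rightarrow> 'n set \<Rightarrow> real^'m \<Rightarrow> real" where
  "block_res_sq A b T x = (\<Sum>j\<in>T. ((A $ j) \<bullet> x - b $ j)^2)"

definition sigma_min :: "real^'m^'n \<Rightarrow> real" where
  "sigma_min A = Inf {norm (A *v x) | x. norm x = 1}"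

definition batch_prob :: "real^'m^'n \<Rightarrow> (nat \<Rightarrow> 'n set) \<Rightarrow> nat \<Rightarrow> nat \<Rightarrow> nat \<Rightarrow> real" where
  "batch_prob A tau d bs i =
     real bs / (2 * real CARD('n)) +
     (1/2) * (block_norm A (tau i))^2 / (\<Sum>j<d. (block_norm A (tau j))^2)"

definition sgd_step :: "real^'m^'n \<Rightarrow> real^'n \<Rightarrow> (nat \<Rightarrow> 'n set) \<Rightarrow> (nat \<Rightarrow> real) \<Rightarrow> real
      \<Rightarrow> real^'m \<Rightarrow> nat \<Rightarrow> real^'m" where
  "sgd_step A b tau p \<gamma> x i =
     x - (\<gamma> / p i) *\<^sub>R (\<Sum>j\<in>tau i. ((A $ j) \<bullet> x - b $ j) *\<^sub>R (A $ j))"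

definition sgd_iter :: "real^'m^'n \<Rightarrow> real^'n \<Rightarrow> (nat \<Rightarrow> 'n set) \<Rightarrow> (nat \<Rightarrow> real) \<Rightarrow> real
      \<Rightarrow> real^'m \<Rightarrow> nat list \<Rightarrow> real^'m" where
  "sgd_iter A b tau p \<gamma> x0 is = foldl (sgd_step A b tau p \<gamma>) x0 is"

text \<open>Expectation of \<parallel>x_k - x_*\<parallel>^2 when i_0,...,i_{k-1} are drawn i.i.d. from p on {0..<d}:
  sum over all index sequences weighted by their probability.\<close>
definition expected_sq_err :: "real^'m^'n \<Rightarrow> real^'n \<Rightarrow> (nat \<Rightarrow> 'n set) \<Rightarrow> nat \<Rightarrow> (nat \<Rightarrow> real)
      \<Rightarrow> real \<Rightarrow> real^'m \<Rightarrow> real^'m \<Rightarrow> nat \<Rightarrow> real" where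
  "expected_sq_err A b tau d p \<gamma> x0 xs k =
     (\<Sum>is\<in>{is. set is \<subseteq> {..<d} \<and> length is = k}.
        (\<Prod>i\<leftarrow>is. p i) * (norm (sgd_iter A b tau p \<gamma> x0 is - xs))^2)"

end

theory Submission
  imports Defs
begin

text \<open>Write \<open>e = x - x\<^sub>*\<close>. Since \<open>x\<^sub>*\<close> is a least-squares solution, the residual
  \<open>A x\<^sub>* - b\<close> is orthogonal to the range of \<open>A\<close>, so the expected SGD direction is
  \<open>A\<^sup>T A e\<close> and one step contracts \<open>\<parallel>e\<parallel>\<^sup>2\<close> in expectation by \<open>1 - \<gamma> \<sigma>\<^sub>m\<^sub>i\<^sub>n\<^sup>2\<close>. The
  variance of the step is split by Young's inequality into a part proportional to
  \<open>\<parallel>A e\<parallel>\<^sup>2\<close>, absorbed by the descent term because the weights satisfy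
  \<open>p(\<tau>\<^sub>i) \<ge> \<parallel>A\<^sub>\<tau>\<^sub>i\<parallel>\<^sup>2 / (2 \<Sum>\<^sub>j \<parallel>A\<^sub>\<tau>\<^sub>j\<parallel>\<^sup>2)\<close>, and a noise part coming from the
  residual at \<open>x\<^sub>*\<close>, controlled by \<open>p(\<tau>\<^sub>i) \<ge> 1/(2d)\<close>. Unrolling the resulting
  recursion gives \<open>(1 - \<gamma> \<sigma>\<^sub>m\<^sub>i\<^sub>n\<^sup>2)\<^sup>k \<epsilon>\<^sub>0\<close> plus a geometric noise sum; the step size makes
  the noise at most \<open>\<epsilon>/2\<close> and the iteration count makes the first term at most \<open>\<epsilon>/2\<close>.\<close>

lemma sum_lists_length_Suc:
  assumes "finite A"
  shows "(\<Sum>is\<in>{is. set is \<subseteq> A \<and> length is = Suc k}. g is)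
       = (\<Sum>is\<in>{is. set is \<subseteq> A \<and> length is = k}. \<Sum>i\<in>A. g (is @ [i]))"
proof -
  let ?L = "{is. set is \<subseteq> A \<and> length is = k}"
  have snoc_image: "{is. set is \<subseteq> A \<and> length is = Suc k} = (\<lambda>(is, i). is @ [i]) ` (?L \<times> A)"
  proof (rule set_eqI, rule iffI)
    fix ys assume "ys \<in> {is. set is \<subseteq> A \<and> length is = Suc k}"
    then obtain zs z where "ys = zs @ [z]" "length zs = k" "set ys \<subseteq> A"
      by (auto simp: length_Suc_conv_rev)
    then show "ys \<in> (\<lambda>(is, i). is @ [i]) ` (?L \<times> A)"
      by (auto intro!: image_eqI[where x = "(zs, z)"])
  qed auto
  have "inj_on (\<lambda>(is, i). is @ [i]) (?L \<times> A)"
    by (auto simp: inj_on_def)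
  then show ?thesis
    unfolding snoc_image
    by (simp add: sum.reindex sum.cartesian_product split_def finite_lists_length_eq assms)
qed

lemma sum_prod_list_lists_length:
  fixes p :: "'a \<Rightarrow> 'b::comm_semiring_1"
  assumes "finite A"
  shows "(\<Sum>is\<in>{is. set is \<subseteq> A \<and> length is = k}. \<Prod>i\<leftarrow>is. p i) = (\<Sum>i\<in>A. p i) ^ k"
proof (induction k)
  case 0
  have "{is. set is \<subseteq> A \<and> length is = 0} = {[]}" by auto
  then show ?case by simp
next
  case (Suc k)
  have "(\<Sum>is\<in>{is. set is \<subseteq> A \<and> length is = k}. \<Sum>i\<in>A. (\<Prod>i\<leftarrow>is. p i) * p i)
      = (\<Sum>is\<in>{is. set is \<subseteq> A \<and> length is = k}. \<Prod>i\<leftarrow>is. p i) * (\<Sum>i\<in>A. p i)"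
    by (simp add: sum_distrib_right sum_distrib_left sum.swap[where A = A])
  then show ?case
    by (simp add: sum_lists_length_Suc[OF assms] Suc.IH mult.commute)
qed

lemma expected_foldl_sq_dist_le:
  fixes F :: "'a::real_normed_vector \<Rightarrow> 'i \<Rightarrow> 'a" and p :: "'i \<Rightarrow> real"
  assumes A: "finite A"
    and p_nonneg: "\<And>i. i \<in> A \<Longrightarrow> p i \<ge> 0" and p_sum: "(\<Sum>i\<in>A. p i) = 1"
    and step: "\<And>x. (\<Sum>i\<in>A. p i * (norm (F x i - y))\<^sup>2) \<le> q * (norm (x - y))\<^sup>2 + D"
    and q_nonneg: "q \<ge> 0"
  shows "(\<Sum>is\<in>{is. set is \<subseteq> A \<and> length is = k}. (\<Prod>i\<leftarrow>is. p i) * (norm (foldl F x0 is - y))\<^sup>2)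
       \<le> q ^ k * (norm (x0 - y))\<^sup>2 + D * (\<Sum>j<k. q ^ j)"
proof (induction k)
  case 0
  have "{is. set is \<subseteq> A \<and> length is = 0} = {[]}" by auto
  then show ?case by simp
next
  case (Suc k)
  let ?L = "{is. set is \<subseteq> A \<and> length is = k}"
  let ?E = "\<lambda>is. (norm (foldl F x0 is - y))\<^sup>2"
  have weight_nonneg: "(\<Prod>i\<leftarrow>is. p i) \<ge> 0" if "is \<in> ?L" for "is"
    using that p_nonneg by (force intro!: prod_list_nonneg)
  have weight_sum: "(\<Sum>is\<in>?L. \<Prod>i\<leftarrow>is. p i) = 1"
    by (simp add: sum_prod_list_lists_length[OF A] p_sum)
  have "(\<Sum>is\<in>{is. set is \<subseteq> A \<and> length is = Suc k}. (\<Prod>i\<leftarrow>is. p i) * ?E is)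
      = (\<Sum>is\<in>?L. (\<Prod>i\<leftarrow>is. p i) * (\<Sum>i\<in>A. p i * (norm (F (foldl F x0 is) i - y))\<^sup>2))"
    by (simp add: sum_lists_length_Suc[OF A] sum_distrib_left mult.assoc mult.left_commute)
  also have "\<dots> \<le> (\<Sum>is\<in>?L. (\<Prod>i\<leftarrow>is. p i) * (q * ?E is + D))"
    by (intro sum_mono mult_left_mono step weight_nonneg)
  also have "\<dots> = q * (\<Sum>is\<in>?L. (\<Prod>i\<leftarrow>is. p i) * ?E is) + D"
    by (simp add: algebra_simps sum.distrib sum_distrib_left
        flip: sum_distrib_right sum_distrib_left[of D] add: weight_sum)
  also have "\<dots> \<le> q * (q ^ k * (norm (x0 - y))\<^sup>2 + D * (\<Sum>j<k. q ^ j)) + D"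
    using Suc.IH q_nonneg by (auto intro: mult_left_mono)
  also have "\<dots> = q ^ Suc k * (norm (x0 - y))\<^sup>2 + D * (\<Sum>j<Suc k. q ^ j)"
    by (simp only: sum.lessThan_Suc_shift) (simp add: algebra_simps sum_distrib_left)
  finally show ?case .
qed

definition index_partition :: "nat \<Rightarrow> (nat \<Rightarrow> 'a set) \<Rightarrow> bool" where
  "index_partition d tau \<longleftrightarrow>
     (\<Union>i<d. tau i) = UNIV \<and> (\<forall>i<d. \<forall>j<d. i \<noteq> j \<longrightarrow> tau i \<inter> tau j = {})"

lemma sum_index_partition:
  fixes f :: "'a::finite \<Rightarrow> 'b::comm_monoid_add"
  assumes "index_partition d tau"
  shows "(\<Sum>i<d. \<Sum>j\<in>tau i. f j) = (\<Sum>j\<in>UNIV. f j)"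
proof -
  have "(\<Sum>j\<in>(\<Union>i<d. tau i). f j) = (\<Sum>i<d. \<Sum>j\<in>tau i. f j)"
    by (rule sum.UNION_disjoint) (use assms in \<open>auto simp: index_partition_def\<close>)
  with assms show ?thesis by (simp add: index_partition_def)
qed

definition block_grad :: "real^'m^'n \<Rightarrow> real^'n \<Rightarrow> 'n set \<Rightarrow> real^'m \<Rightarrow> real^'m" where
  "block_grad A b T x = (\<Sum>j\<in>T. ((A $ j) \<bullet> x - b $ j) *\<^sub>R (A $ j))"

lemma sgd_step_eq_block_grad:
  "sgd_step A b tau p \<gamma> x i = x - (\<gamma> / p i) *\<^sub>R block_grad A b (tau i) x"
  by (simp add: sgd_step_def block_grad_def)

lemma block_grad_split:
  "block_grad A b T x = block_grad A 0 T (x - y) + block_grad A b T y"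
  by (simp add: block_grad_def inner_diff_right algebra_simps flip: sum.distrib)

lemma bounded_linear_block_map: "bounded_linear (block_map A T)"
proof -
  have "linear (block_map A T)"
    by (rule linearI) (auto simp: block_map_def vec_eq_iff inner_add_right inner_scaleR_right)
  then show ?thesis by (simp add: linear_conv_bounded_linear)
qed

lemma norm_block_map_le: "norm (block_map A T x) \<le> block_norm A T * norm x"
  unfolding block_norm_def by (rule onorm[OF bounded_linear_block_map])

lemma block_norm_nonneg: "block_norm A T \<ge> 0"
  unfolding block_norm_def by (rule onorm_pos_le[OF bounded_linear_block_map])

lemma block_res_sq_nonneg: "block_res_sq A b T x \<ge> 0"
  unfolding block_res_sq_def by (intro sum_nonneg) simp

lemma norm_vec_restrict_sq:
  fixes f :: "'n::finite \<Rightarrow> real"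
  shows "(norm (\<chi> j. if j \<in> T then f j else 0))\<^sup>2 = (\<Sum>j\<in>T. (f j)\<^sup>2)"
proof -
  have "(norm (\<chi> j. if j \<in> T then f j else 0))\<^sup>2 = (\<Sum>j\<in>UNIV. if j \<in> T then (f j)\<^sup>2 else 0)"
    unfolding power2_norm_eq_inner
    by (simp add: inner_vec_def power2_eq_square if_distrib cong: if_cong)
  then show ?thesis by (simp add: sum.If_cases)
qed

lemma norm_block_map_sq: "(norm (block_map A T x))\<^sup>2 = block_res_sq A 0 T x"
  by (simp add: block_map_def block_res_sq_def norm_vec_restrict_sq)

lemma norm_matrix_vector_mult_sq:
  fixes A :: "real^'m^'n"
  shows "(norm (A *v x))\<^sup>2 = (\<Sum>j\<in>UNIV. ((A $ j) \<bullet> x)\<^sup>2)"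
proof -
  have "(norm (A *v x))\<^sup>2 = (\<Sum>j\<in>UNIV. (A *v x) $ j * (A *v x) $ j)"
    unfolding power2_norm_eq_inner inner_vec_def by simp
  then show ?thesis
    by (simp only: matrix_vector_mul_component power2_eq_square)
qed

lemma norm_matrix_vector_mult_sq_blocks:
  assumes "index_partition d tau"
  shows "(norm (A *v x))\<^sup>2 = (\<Sum>i<d. (norm (block_map A (tau i) x))\<^sup>2)"
  by (simp add: norm_block_map_sq block_res_sq_def norm_matrix_vector_mult_sq
      sum_index_partition[OF assms])

text \<open>Duality: \<open>\<parallel>A\<^sub>T\<^sup>T c\<parallel> \<le> \<parallel>A\<^sub>T\<parallel> \<parallel>c\<parallel>\<close>, proved by testing \<open>A\<^sub>T\<^sup>T c\<close> against itself.\<close>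

lemma norm_sum_scaleR_rows_sq_le:
  fixes A :: "real^'m^'n"
  shows "(norm (\<Sum>j\<in>T. c j *\<^sub>R (A $ j)))\<^sup>2 \<le> (block_norm A T)\<^sup>2 * (\<Sum>j\<in>T. (c j)\<^sup>2)"
proof -
  define w where "w = (\<Sum>j\<in>T. c j *\<^sub>R (A $ j))"
  define cv :: "real^'n" where "cv = (\<chi> j. if j \<in> T then c j else 0)"
  have "cv \<bullet> block_map A T w = (\<Sum>j\<in>UNIV. if j \<in> T then c j * ((A $ j) \<bullet> w) else 0)"
    by (simp add: inner_vec_def cv_def block_map_def if_distrib cong: if_cong)
  also have "\<dots> = w \<bullet> w"
    by (simp add: sum.If_cases w_def inner_sum_left)
  finally have "(norm w)\<^sup>2 = cv \<bullet> block_map A T w"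
    by (simp add: power2_norm_eq_inner)
  also have "\<dots> \<le> norm cv * (block_norm A T * norm w)"
    by (intro order_trans[OF norm_cauchy_schwarz] mult_left_mono norm_block_map_le) simp
  finally have "norm w \<le> norm cv * block_norm A T"
    by (cases "norm w = 0") (auto simp: power2_eq_square block_norm_nonneg)
  then have "(norm w)\<^sup>2 \<le> (norm cv * block_norm A T)\<^sup>2"
    by (intro power_mono) auto
  then show ?thesis
    by (simp add: w_def cv_def power_mult_distrib norm_vec_restrict_sq mult.commute)
qed

lemma norm_block_grad_sq_le:
  "(norm (block_grad A b T x))\<^sup>2 \<le> (block_norm A T)\<^sup>2 * block_res_sq A b T x"
  unfolding block_grad_def block_res_sq_def by (rule norm_sum_scaleR_rows_sq_le)

lemma sum_inner_block_grad:
  assumes "index_partition d tau"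
  shows "(\<Sum>i<d. e \<bullet> block_grad A b (tau i) x) = (A *v x - b) \<bullet> (A *v e)"
proof -
  have "(\<Sum>i<d. e \<bullet> block_grad A b (tau i) x)
      = (\<Sum>i<d. \<Sum>j\<in>tau i. ((A $ j) \<bullet> x - b $ j) * ((A $ j) \<bullet> e))"
    by (simp add: block_grad_def inner_sum_right inner_commute)
  also have "\<dots> = (\<Sum>j\<in>UNIV. ((A $ j) \<bullet> x - b $ j) * ((A $ j) \<bullet> e))"
    by (rule sum_index_partition[OF assms])
  finally show ?thesis
    by (simp add: inner_vec_def matrix_vector_mul_component)
qed

lemma sigma_min_le:
  assumes "norm x = 1"
  shows "sigma_min A \<le> norm (A *v x)"
  unfolding sigma_min_def
  by (rule cInf_lower) (use assms in \<open>auto intro: bdd_belowI[of _ 0]\<close>)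

lemma sigma_min_nonneg: "sigma_min A \<ge> 0"
proof -
  obtain u :: "real^'a" where "norm u = 1"
    using vector_choose_size[of 1] by auto
  then show ?thesis
    unfolding sigma_min_def by (intro cInf_greatest) auto
qed

lemma sigma_min_sq_mult_le: "(sigma_min A)\<^sup>2 * (norm e)\<^sup>2 \<le> (norm (A *v e))\<^sup>2"
proof (cases "e = 0")
  case False
  then have "sigma_min A \<le> norm (A *v ((1 / norm e) *\<^sub>R e))"
    by (intro sigma_min_le) simp
  also have "\<dots> = norm (A *v e) / norm e"
    by (simp add: matrix_vector_mult_scaleR)
  finally have "sigma_min A * norm e \<le> norm (A *v e)"
    using False by (simp add: field_simps)
  then have "(sigma_min A * norm e)\<^sup>2 \<le> (norm (A *v e))\<^sup>2"
    by (intro power_mono mult_nonneg_nonneg sigma_min_nonneg norm_ge_zero)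
  then show ?thesis by (simp add: power_mult_distrib)
qed simp

text \<open>The infimum over the unit sphere is attained by compactness, and is nonzero by injectivity.\<close>

lemma sigma_min_pos:
  fixes A :: "real^'m^'n"
  assumes inj: "inj ((*v) A)"
  shows "sigma_min A > 0"
proof -
  obtain u :: "real^'m" where "norm u = 1"
    using vector_choose_size[of 1] by auto
  then have sphere_ne: "sphere (0::real^'m) 1 \<noteq> {}" by auto
  obtain x0 where x0: "x0 \<in> sphere 0 1" and x0_min: "\<forall>y\<in>sphere 0 1. norm (A *v x0) \<le> norm (A *v y)"
    using continuous_attains_inf[OF compact_sphere sphere_ne, of "\<lambda>x. norm (A *v x)"]
    by (metis continuous_on_norm matrix_vector_mult_linear_continuous_on)
  have "A *v x0 \<noteq> A *v 0"
    using x0 injD[OF inj] by fastforce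
  then have "norm (A *v x0) > 0" by simp
  also have "norm (A *v x0) \<le> sigma_min A"
    unfolding sigma_min_def using x0 x0_min by (intro cInf_greatest) auto
  finally show ?thesis .
qed

lemma sigma_min_sq_le_sum_block_norm_sq:
  fixes A :: "real^'m^'n"
  assumes "index_partition d tau"
  shows "(sigma_min A)\<^sup>2 \<le> (\<Sum>i<d. (block_norm A (tau i))\<^sup>2)"
proof -
  obtain u :: "real^'m" where u: "norm u = 1"
    using vector_choose_size[of 1] by auto
  have "(sigma_min A)\<^sup>2 \<le> (norm (A *v u))\<^sup>2"
    using sigma_min_sq_mult_le[of A u] u by simp
  also have "\<dots> = (\<Sum>i<d. (norm (block_map A (tau i) u))\<^sup>2)"
    by (rule norm_matrix_vector_mult_sq_blocks[OF assms])
  also have "\<dots> \<le> (\<Sum>i<d. (block_norm A (tau i))\<^sup>2)"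
    using norm_block_map_le[of A _ u] u
    by (intro sum_mono power_mono) auto
  finally show ?thesis .
qed

lemma linear_coeff_zero_if_quadratic_nonneg:
  fixes q W :: real
  assumes nonneg: "\<And>s. 0 \<le> 2 * s * q + s\<^sup>2 * W" and "W \<ge> 0"
  shows "q = 0"
proof -
  define s where "s = - q / (W + 1)"
  have "s * (W + 1) = - q"
    using \<open>W \<ge> 0\<close> by (simp add: s_def)
  moreover have "(2 * s * q + s\<^sup>2 * W) * (W + 1)\<^sup>2
      = 2 * q * (s * (W + 1)) * (W + 1) + (s * (W + 1))\<^sup>2 * W"
    by (simp add: algebra_simps power2_eq_square)
  ultimately have "(2 * s * q + s\<^sup>2 * W) * (W + 1)\<^sup>2 = - q\<^sup>2 * (W + 2)"
    by (simp add: algebra_simps power2_eq_square)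
  moreover have "0 \<le> (2 * s * q + s\<^sup>2 * W) * (W + 1)\<^sup>2"
    using nonneg by simp
  ultimately have "q\<^sup>2 * (W + 2) \<le> 0" by linarith
  with \<open>W \<ge> 0\<close> show ?thesis
    by (smt (verit) mult_pos_pos zero_less_power2)
qed

lemma least_squares_residual_orthogonal:
  fixes A :: "real^'m^'n"
  assumes min: "\<forall>x. (1/2) * (norm (A *v xs - b))\<^sup>2 \<le> (1/2) * (norm (A *v x - b))\<^sup>2"
  shows "(A *v xs - b) \<bullet> (A *v e) = 0"
proof (rule linear_coeff_zero_if_quadratic_nonneg)
  fix s :: real
  have shift: "A *v (xs + s *\<^sub>R e) - b = (A *v xs - b) + s *\<^sub>R (A *v e)"
    by (simp add: matrix_vector_right_distrib matrix_vector_mult_scaleR)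
  have "(norm (A *v xs - b))\<^sup>2 \<le> (norm ((A *v xs - b) + s *\<^sub>R (A *v e)))\<^sup>2"
    using min[rule_format, of "xs + s *\<^sub>R e"] unfolding shift by simp
  then show "0 \<le> 2 * s * ((A *v xs - b) \<bullet> (A *v e)) + s\<^sup>2 * (norm (A *v e))\<^sup>2"
    unfolding power2_norm_eq_inner
    by (simp add: inner_add_left inner_add_right inner_commute power2_eq_square algebra_simps)
qed simp

lemma norm_add_sq_le_weighted:
  fixes u v :: "'a::real_inner"
  assumes "t > 0"
  shows "(norm (u + v))\<^sup>2 \<le> (1 + t) * (norm u)\<^sup>2 + (1 + 1/t) * (norm v)\<^sup>2"
proof -
  have "2 * (norm u * norm v) \<le> t * (norm u)\<^sup>2 + (norm v)\<^sup>2 / t"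
  proof -
    have "0 \<le> (t * norm u - norm v)\<^sup>2 / t" using assms by simp
    also have "\<dots> = t * (norm u)\<^sup>2 + (norm v)\<^sup>2 / t - 2 * (norm u * norm v)"
      using assms by (simp add: field_simps power2_eq_square)
    finally show ?thesis by simp
  qed
  moreover have "(norm (u + v))\<^sup>2 = (norm u)\<^sup>2 + 2 * (u \<bullet> v) + (norm v)\<^sup>2"
    by (simp add: power2_norm_eq_inner inner_add_left inner_add_right inner_commute)
  ultimately show ?thesis
    using norm_cauchy_schwarz[of u v] by (simp add: algebra_simps)
qed

lemma sum_block_grad_sq_div_le:
  fixes A :: "real^'m^'n"
  assumes partition: "index_partition d tau" and t_pos: "t > 0"
    and p_pos: "\<And>i. i < d \<Longrightarrow> p i > 0"
    and p_ge_norm: "\<And>i. i < d \<Longrightarrow> (block_norm A (tau i))\<^sup>2 \<le> 2 * S * p i"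
    and p_ge_uniform: "\<And>i. i < d \<Longrightarrow> 1 \<le> 2 * real d * p i"
  shows "(\<Sum>i<d. (norm (block_grad A b (tau i) x))\<^sup>2 / p i)
    \<le> (1 + t) * (2 * S) * (norm (A *v (x - y)))\<^sup>2
      + (1 + 1/t) * (2 * real d) * (\<Sum>i<d. (block_norm A (tau i))\<^sup>2 * block_res_sq A b (tau i) y)"
proof -
  let ?N = "\<lambda>i. (block_norm A (tau i))\<^sup>2"
  let ?E = "\<lambda>i. block_res_sq A 0 (tau i) (x - y)"
  let ?R = "\<lambda>i. ?N i * block_res_sq A b (tau i) y"
  have block_bound: "(norm (block_grad A b (tau i) x))\<^sup>2 / p i \<le> (1 + t) * (2 * S) * ?E i + (1 + 1/t) * (2 * real d) * ?R i"
    if i: "i < d" for i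
  proof -
    have "(norm (block_grad A b (tau i) x))\<^sup>2
        \<le> (1 + t) * (norm (block_grad A 0 (tau i) (x - y)))\<^sup>2 + (1 + 1/t) * (norm (block_grad A b (tau i) y))\<^sup>2"
      unfolding block_grad_split[of A b "tau i" x y] by (rule norm_add_sq_le_weighted[OF t_pos])
    also have "\<dots> \<le> (1 + t) * (?N i * ?E i) + (1 + 1/t) * ?R i"
      using t_pos by (intro add_mono mult_left_mono norm_block_grad_sq_le) auto
    also have "\<dots> \<le> (1 + t) * ((2 * S * p i) * ?E i) + (1 + 1/t) * ((2 * real d * p i) * ?R i)"
    proof -
      have "?N i * ?E i \<le> (2 * S * p i) * ?E i"
        using p_ge_norm[OF i] by (intro mult_right_mono) (auto simp: block_res_sq_nonneg)
      moreover have "?R i \<le> (2 * real d * p i) * ?R i"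
        using mult_right_mono[OF p_ge_uniform[OF i], of "?R i"]
        by (simp add: block_res_sq_nonneg)
      ultimately show ?thesis
        using t_pos by (intro add_mono mult_left_mono) auto
    qed
    finally show ?thesis
      using p_pos[OF i] by (simp add: divide_le_eq algebra_simps)
  qed
  have "(\<Sum>i<d. (norm (block_grad A b (tau i) x))\<^sup>2 / p i)
      \<le> (\<Sum>i<d. (1 + t) * (2 * S) * ?E i + (1 + 1/t) * (2 * real d) * ?R i)"
    by (intro sum_mono block_bound) simp
  also have "\<dots> = (1 + t) * (2 * S) * (\<Sum>i<d. ?E i) + (1 + 1/t) * (2 * real d) * (\<Sum>i<d. ?R i)"
    by (simp add: sum.distrib sum_distrib_left)
  also have "(\<Sum>i<d. ?E i) = (norm (A *v (x - y)))\<^sup>2"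
    by (simp add: norm_matrix_vector_mult_sq_blocks[OF partition] norm_block_map_sq)
  finally show ?thesis .
qed

text \<open>The auxiliary Young parameter \<open>t = (1 - 2\<gamma>S)/(2\<gamma>S)\<close> makes the \<open>\<parallel>A e\<parallel>\<^sup>2\<close>
  part of the variance exactly half of the descent term \<open>2\<gamma>\<parallel>A e\<parallel>\<^sup>2\<close>.\<close>

lemma expected_sgd_step_sq_dist_le:
  fixes A :: "real^'m^'n"
  assumes partition: "index_partition d tau"
    and orth: "\<And>e. (A *v xs - b) \<bullet> (A *v e) = 0"
    and p_pos: "\<And>i. i < d \<Longrightarrow> p i > 0" and p_sum: "(\<Sum>i<d. p i) = 1"
    and p_ge_norm: "\<And>i. i < d \<Longrightarrow> (block_norm A (tau i))\<^sup>2 \<le> 2 * S * p i"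
    and p_ge_uniform: "\<And>i. i < d \<Longrightarrow> 1 \<le> 2 * real d * p i"
    and \<gamma>_pos: "\<gamma> > 0" and S_pos: "S > 0" and \<gamma>_small: "2 * \<gamma> * S < 1"
  shows "(\<Sum>i<d. p i * (norm (sgd_step A b tau p \<gamma> x i - xs))\<^sup>2)
    \<le> (1 - \<gamma> * (sigma_min A)\<^sup>2) * (norm (x - xs))\<^sup>2
      + 2 * \<gamma>\<^sup>2 * real d * (\<Sum>i<d. (block_norm A (tau i))\<^sup>2 * block_res_sq A b (tau i) xs)
        / (1 - 2 * \<gamma> * S)"
proof -
  define e where "e = x - xs"
  define G where "G i = block_grad A b (tau i) x" for i
  define R where "R = (\<Sum>i<d. (block_norm A (tau i))\<^sup>2 * block_res_sq A b (tau i) xs)"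
  define t where "t = (1 - 2 * \<gamma> * S) / (2 * \<gamma> * S)"
  have t_pos: "t > 0"
    using \<gamma>_pos S_pos \<gamma>_small by (simp add: t_def)
  have t_descent: "\<gamma>\<^sup>2 * ((1 + t) * (2 * S)) = \<gamma>"
    using \<gamma>_pos S_pos by (simp add: t_def field_simps power2_eq_square)
  have t_noise: "\<gamma>\<^sup>2 * ((1 + 1/t) * (2 * real d) * R) = 2 * \<gamma>\<^sup>2 * real d * R / (1 - 2 * \<gamma> * S)"
    using \<gamma>_pos S_pos \<gamma>_small by (simp add: t_def field_simps)
  have expand: "p i * (norm (sgd_step A b tau p \<gamma> x i - xs))\<^sup>2
      = p i * (norm e)\<^sup>2 - 2 * \<gamma> * (e \<bullet> G i) + \<gamma>\<^sup>2 * ((norm (G i))\<^sup>2 / p i)" if "i < d" for i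
  proof -
    have diff: "sgd_step A b tau p \<gamma> x i - xs = e - (\<gamma> / p i) *\<^sub>R G i"
      by (simp add: sgd_step_eq_block_grad e_def G_def)
    have "(norm (sgd_step A b tau p \<gamma> x i - xs))\<^sup>2
        = (norm e)\<^sup>2 - 2 * (\<gamma> / p i) * (e \<bullet> G i) + (\<gamma> / p i)\<^sup>2 * (norm (G i))\<^sup>2"
      unfolding diff power2_norm_eq_inner
      by (simp add: inner_diff_left inner_diff_right inner_commute power2_eq_square algebra_simps)
    then show ?thesis
      using p_pos[OF that] by (simp add: field_simps power2_eq_square)
  qed
  have descent: "(\<Sum>i<d. e \<bullet> G i) = (norm (A *v e))\<^sup>2"
  proof -
    have residual: "A *v x - b = (A *v xs - b) + A *v e"
      by (simp add: e_def matrix_vector_mult_diff_distrib)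
    show ?thesis
      using orth[of e] unfolding G_def sum_inner_block_grad[OF partition] residual
      by (simp add: inner_add_left power2_norm_eq_inner)
  qed
  have "(\<Sum>i<d. p i * (norm (sgd_step A b tau p \<gamma> x i - xs))\<^sup>2)
      = (norm e)\<^sup>2 - 2 * \<gamma> * (norm (A *v e))\<^sup>2 + \<gamma>\<^sup>2 * (\<Sum>i<d. (norm (G i))\<^sup>2 / p i)"
    by (simp add: expand sum.distrib sum_subtractf p_sum descent
        flip: sum_distrib_left sum_distrib_right) (simp add: sum_distrib_left)
  also have "\<dots> \<le> (norm e)\<^sup>2 - 2 * \<gamma> * (norm (A *v e))\<^sup>2
      + \<gamma>\<^sup>2 * ((1 + t) * (2 * S) * (norm (A *v e))\<^sup>2 + (1 + 1/t) * (2 * real d) * R)"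
    unfolding G_def e_def R_def
    by (intro add_left_mono mult_left_mono sum_block_grad_sq_div_le
        [OF partition t_pos p_pos p_ge_norm p_ge_uniform]) auto
  also have "\<dots> = (norm e)\<^sup>2 - 2 * \<gamma> * (norm (A *v e))\<^sup>2
      + \<gamma>\<^sup>2 * ((1 + t) * (2 * S)) * (norm (A *v e))\<^sup>2 + \<gamma>\<^sup>2 * ((1 + 1/t) * (2 * real d) * R)"
    by (simp add: algebra_simps)
  also have "\<dots> = (norm e)\<^sup>2 - \<gamma> * (norm (A *v e))\<^sup>2 + 2 * \<gamma>\<^sup>2 * real d * R / (1 - 2 * \<gamma> * S)"
    unfolding t_descent t_noise by simp
  also have "\<dots> \<le> (1 - \<gamma> * (sigma_min A)\<^sup>2) * (norm e)\<^sup>2 + 2 * \<gamma>\<^sup>2 * real d * R / (1 - 2 * \<gamma> * S)"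
    using mult_left_mono[OF sigma_min_sq_mult_le[of A e], of \<gamma>] \<gamma>_pos
    by (simp add: algebra_simps)
  finally show ?thesis
    by (simp add: e_def R_def)
qed

lemma batch_prob_weights:
  fixes A :: "real^'m^'n"
  assumes d_bs: "d * bs = CARD('n)" and bs_pos: "bs > 0"
    and S_def: "S = (\<Sum>i<d. (block_norm A (tau i))\<^sup>2)" and S_pos: "S > 0"
  shows batch_prob_pos: "\<And>i. batch_prob A tau d bs i > 0"
    and sum_batch_prob: "(\<Sum>i<d. batch_prob A tau d bs i) = 1"
    and batch_prob_ge_norm: "\<And>i. (block_norm A (tau i))\<^sup>2 \<le> 2 * S * batch_prob A tau d bs i"
    and batch_prob_ge_uniform: "\<And>i. 1 \<le> 2 * real d * batch_prob A tau d bs i"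
proof -
  have d_pos: "d > 0"
    using d_bs by (metis mult_is_0 zero_less_iff_neq_zero zero_less_card_finite)
  have p_eq: "batch_prob A tau d bs i = 1 / (2 * real d) + (block_norm A (tau i))\<^sup>2 / (2 * S)" for i
    using bs_pos by (simp add: batch_prob_def S_def flip: d_bs)
  show "batch_prob A tau d bs i > 0" for i
    unfolding p_eq using d_pos S_pos by (intro add_pos_nonneg) auto
  show "(block_norm A (tau i))\<^sup>2 \<le> 2 * S * batch_prob A tau d bs i" for i
    unfolding p_eq using d_pos S_pos by (simp add: field_simps)
  show "1 \<le> 2 * real d * batch_prob A tau d bs i" for i
    unfolding p_eq using d_pos S_pos by (simp add: field_simps)
  have "(\<Sum>i<d. batch_prob A tau d bs i) = real d * (1 / (2 * real d)) + S / (2 * S)"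
    by (simp add: p_eq sum.distrib S_def flip: sum_divide_distrib)
  then show "(\<Sum>i<d. batch_prob A tau d bs i) = 1"
    using d_pos S_pos by simp
qed

lemma power_one_minus_mult_le_half:
  fixes c \<epsilon> \<epsilon>0 :: real
  assumes c: "0 < c" "c \<le> 1" and \<epsilon>_pos: "\<epsilon> > 0" and \<epsilon>0_nonneg: "\<epsilon>0 \<ge> 0"
    and k_large: "ln (2 * \<epsilon>0 / \<epsilon>) / c \<le> real k"
  shows "(1 - c) ^ k * \<epsilon>0 \<le> \<epsilon> / 2"
proof (cases "\<epsilon>0 \<le> \<epsilon> / 2")
  case True
  have "(1 - c) ^ k \<le> 1"
    using c by (intro power_le_one) auto
  then show ?thesis
    using True \<epsilon>0_nonneg mult_left_le_one_le[of \<epsilon>0 "(1 - c) ^ k"] c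
    by (simp add: mult.commute)
next
  case False
  then have \<epsilon>0_pos: "\<epsilon>0 > 0" using \<epsilon>_pos by linarith
  have "(1 - c) ^ k \<le> exp (- c) ^ k"
    using c exp_ge_add_one_self[of "- c"] by (intro power_mono) auto
  also have "\<dots> = exp (- (c * real k))"
    by (simp add: mult.commute flip: exp_of_nat_mult)
  also have "\<dots> \<le> exp (- ln (2 * \<epsilon>0 / \<epsilon>))"
    using k_large c by (simp add: divide_le_eq mult.commute)
  also have "\<dots> = \<epsilon> / (2 * \<epsilon>0)"
    using \<epsilon>0_pos \<epsilon>_pos by (simp add: exp_minus)
  finally have "(1 - c) ^ k * \<epsilon>0 \<le> \<epsilon> / (2 * \<epsilon>0) * \<epsilon>0"
    using \<epsilon>0_pos by (intro mult_right_mono) auto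
  then show ?thesis
    using \<epsilon>0_pos by simp
qed

lemma linear_rate_with_noise_le:
  fixes c D \<epsilon> \<epsilon>0 :: real
  assumes c: "0 < c" "c \<le> 1" and D: "0 \<le> D" "D \<le> c * (\<epsilon> / 2)"
    and \<epsilon>_pos: "\<epsilon> > 0" and \<epsilon>0_nonneg: "\<epsilon>0 \<ge> 0"
    and k_large: "ln (2 * \<epsilon>0 / \<epsilon>) / c \<le> real k"
  shows "(1 - c) ^ k * \<epsilon>0 + D * (\<Sum>j<k. (1 - c) ^ j) \<le> \<epsilon>"
proof -
  have "(\<Sum>j<k. (1 - c) ^ j) = (1 - (1 - c) ^ k) / c"
    using c by (simp add: sum_gp_strict)
  also have "\<dots> \<le> 1 / c"
    using c by (intro divide_right_mono) auto
  finally have "D * (\<Sum>j<k. (1 - c) ^ j) \<le> D / c"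
    using mult_left_mono[of _ "1 / c" D] D by simp
  also have "\<dots> \<le> \<epsilon> / 2"
    using D c by (simp add: divide_le_eq mult.commute)
  finally show ?thesis
    using power_one_minus_mult_le_half[OF c \<epsilon>_pos \<epsilon>0_nonneg k_large] by linarith
qed

lemma sgd_step_size_bounds:
  fixes \<sigma> S R \<epsilon> :: real and d :: nat
  assumes \<sigma>_pos: "\<sigma> > 0" and \<sigma>_le: "\<sigma>\<^sup>2 \<le> S" and R_nonneg: "R \<ge> 0" and \<epsilon>_pos: "\<epsilon> > 0"
    and \<gamma>_def: "\<gamma> = ((1/4) * \<epsilon>) / (\<epsilon> * S + real d * (1 / \<sigma>^2) * R)"
  shows "\<gamma> > 0" and "2 * \<gamma> * S < 1" and "\<gamma> * \<sigma>\<^sup>2 \<le> 1"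
    and "2 * \<gamma>\<^sup>2 * real d * R / (1 - 2 * \<gamma> * S) \<le> \<gamma> * \<sigma>\<^sup>2 * (\<epsilon> / 2)"
    and "4 * ((1 / \<sigma>^2) * S + real d * (1 / \<sigma>^4) * R / \<epsilon>) = 1 / (\<gamma> * \<sigma>\<^sup>2)"
proof -
  define Q where "Q = \<epsilon> * S + real d * (1 / \<sigma>^2) * R"
  have S_pos: "S > 0"
    using \<sigma>_pos \<sigma>_le by (meson less_le_trans zero_less_power)
  have dR: "real d * (1 / \<sigma>^2) * R \<ge> 0"
    using R_nonneg by simp
  have Q_pos: "Q > 0"
    unfolding Q_def using \<epsilon>_pos S_pos dR by (simp add: add_pos_nonneg)
  have \<gamma>Q: "\<gamma> * Q = \<epsilon> / 4"
    unfolding \<gamma>_def Q_def[symmetric] using Q_pos by simp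
  show \<gamma>_pos: "\<gamma> > 0"
    using Q_pos \<epsilon>_pos by (simp add: \<gamma>_def Q_def)
  have \<gamma>S: "4 * (\<gamma> * S) \<le> 1"
  proof -
    have "\<epsilon> * (4 * (\<gamma> * S)) \<le> 4 * (\<gamma> * Q)"
      using \<gamma>_pos R_nonneg by (simp add: Q_def algebra_simps)
    then show ?thesis
      using \<gamma>Q \<epsilon>_pos by simp
  qed
  then show "2 * \<gamma> * S < 1"
    using \<gamma>_pos S_pos by simp
  show "\<gamma> * \<sigma>\<^sup>2 \<le> 1"
    using \<gamma>S mult_left_mono[OF \<sigma>_le less_imp_le[OF \<gamma>_pos]] by linarith
  have "2 * \<gamma>\<^sup>2 * real d * R \<le> \<gamma> * \<sigma>\<^sup>2 * (\<epsilon> / 2) * (1 - 2 * \<gamma> * S)"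
  proof -
    have \<gamma>dR: "\<gamma> * (real d * R) = \<sigma>\<^sup>2 * (\<epsilon> / 4 - \<gamma> * \<epsilon> * S)"
      using \<gamma>Q \<sigma>_pos unfolding Q_def by (simp add: field_simps)
    have "2 * \<gamma>\<^sup>2 * real d * R = 2 * \<gamma> * (\<gamma> * (real d * R))"
      by (simp add: algebra_simps power2_eq_square)
    also have "\<dots> = \<gamma> * \<sigma>\<^sup>2 * (\<epsilon> / 2) * (1 - 4 * \<gamma> * S)"
      unfolding \<gamma>dR by (simp add: algebra_simps)
    also have "\<dots> \<le> \<gamma> * \<sigma>\<^sup>2 * (\<epsilon> / 2) * (1 - 2 * \<gamma> * S)"
      using \<gamma>_pos S_pos \<sigma>_pos \<epsilon>_pos by (intro mult_left_mono) auto
    finally show ?thesis .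
  qed
  then show "2 * \<gamma>\<^sup>2 * real d * R / (1 - 2 * \<gamma> * S) \<le> \<gamma> * \<sigma>\<^sup>2 * (\<epsilon> / 2)"
    using \<gamma>S \<gamma>_pos S_pos by (simp add: divide_le_eq)
  show "4 * ((1 / \<sigma>^2) * S + real d * (1 / \<sigma>^4) * R / \<epsilon>) = 1 / (\<gamma> * \<sigma>\<^sup>2)"
    using Q_pos \<sigma>_pos \<epsilon>_pos
    by (simp add: \<gamma>_def Q_def field_simps power2_eq_square power4_eq_xxxx)
qed

theorem corollary3p1:
  fixes A :: "real^'m^'n" and b :: "real^'n" and x0 xs :: "real^'m"
    and bs d :: nat and tau :: "nat \<Rightarrow> 'n set" and \<epsilon> :: real
  assumes full_rank: "rank A = CARD('m)"
    and xs_min: "\<forall>x. (1/2) * (norm (A *v xs - b))^2 \<le> (1/2) * (norm (A *v x - b))^2"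
    and bs_pos: "bs > 0" and bs_dvd: "bs dvd CARD('n)"
    and d_def: "d = CARD('n) div bs"
    and part_cover: "(\<Union>i<d. tau i) = UNIV"
    and part_disj: "\<forall>i<d. \<forall>j<d. i \<noteq> j \<longrightarrow> tau i \<inter> tau j = {}"
    and part_card: "\<forall>i<d. card (tau i) = bs"
    and eps_pos: "\<epsilon> > 0"
  shows
    "let p = batch_prob A tau d bs;
         S = (\<Sum>i<d. (block_norm A (tau i))^2);
         R = (\<Sum>i<d. (block_norm A (tau i))^2 * block_res_sq A b (tau i) xs);
         \<sigma> = sigma_min A;
         \<gamma> = ((1/4) * \<epsilon>) / (\<epsilon> * S + real d * (1 / \<sigma>^2) * R);
         \<epsilon>0 = (norm (x0 - xs))^2;
         k = nat \<lceil>4 * ln (2 * \<epsilon>0 / \<epsilon>) * ((1 / \<sigma>^2) * S + real d * (1 / \<sigma>^4) * R / \<epsilon>)\<rceil>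
     in expected_sq_err A b tau d p \<gamma> x0 xs k \<le> \<epsilon>"
proof -
  define p where "p = batch_prob A tau d bs"
  define S where "S = (\<Sum>i<d. (block_norm A (tau i))^2)"
  define R where "R = (\<Sum>i<d. (block_norm A (tau i))^2 * block_res_sq A b (tau i) xs)"
  define \<sigma> where "\<sigma> = sigma_min A"
  define \<gamma> where "\<gamma> = ((1/4) * \<epsilon>) / (\<epsilon> * S + real d * (1 / \<sigma>^2) * R)"
  define \<epsilon>0 where "\<epsilon>0 = (norm (x0 - xs))^2"
  define k where "k = nat \<lceil>4 * ln (2 * \<epsilon>0 / \<epsilon>) * ((1 / \<sigma>^2) * S + real d * (1 / \<sigma>^4) * R / \<epsilon>)\<rceil>"
  have partition: "index_partition d tau"
    using part_cover part_disj by (simp add: index_partition_def)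
  have \<sigma>_pos: "\<sigma> > 0"
    unfolding \<sigma>_def using sigma_min_pos full_rank full_rank_injective by blast
  have \<sigma>_le: "\<sigma>\<^sup>2 \<le> S"
    unfolding \<sigma>_def S_def by (rule sigma_min_sq_le_sum_block_norm_sq[OF partition])
  have R_nonneg: "R \<ge> 0"
    unfolding R_def by (intro sum_nonneg mult_nonneg_nonneg block_res_sq_nonneg) auto
  have S_pos: "S > 0"
    using \<sigma>_pos \<sigma>_le by (meson less_le_trans zero_less_power)
  have d_bs: "d * bs = CARD('n)"
    using bs_dvd d_def by simp
  note step_size = sgd_step_size_bounds[OF \<sigma>_pos \<sigma>_le R_nonneg eps_pos \<gamma>_def]
  note weights = batch_prob_weights[OF d_bs bs_pos S_def S_pos, folded p_def]
  have one_step: "\<And>x. (\<Sum>i<d. p i * (norm (sgd_step A b tau p \<gamma> x i - xs))\<^sup>2)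
      \<le> (1 - \<gamma> * \<sigma>\<^sup>2) * (norm (x - xs))\<^sup>2 + 2 * \<gamma>\<^sup>2 * real d * R / (1 - 2 * \<gamma> * S)"
    unfolding \<sigma>_def R_def
    by (rule expected_sgd_step_sq_dist_le[OF partition least_squares_residual_orthogonal[OF xs_min]])
      (use weights step_size S_pos in auto)
  have "expected_sq_err A b tau d p \<gamma> x0 xs k
      \<le> (1 - \<gamma> * \<sigma>\<^sup>2) ^ k * \<epsilon>0 + 2 * \<gamma>\<^sup>2 * real d * R / (1 - 2 * \<gamma> * S) * (\<Sum>j<k. (1 - \<gamma> * \<sigma>\<^sup>2) ^ j)"
    unfolding expected_sq_err_def sgd_iter_def \<epsilon>0_def
    by (rule expected_foldl_sq_dist_le[OF _ _ _ one_step])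
      (use weights step_size in \<open>auto intro: less_imp_le\<close>)
  also have "\<dots> \<le> \<epsilon>"
  proof (rule linear_rate_with_noise_le)
    have "4 * ln (2 * \<epsilon>0 / \<epsilon>) * ((1 / \<sigma>^2) * S + real d * (1 / \<sigma>^4) * R / \<epsilon>)
        = ln (2 * \<epsilon>0 / \<epsilon>) / (\<gamma> * \<sigma>\<^sup>2)"
      by (metis step_size(5) mult.assoc mult.commute times_divide_eq_right mult_1_right)
    then show "ln (2 * \<epsilon>0 / \<epsilon>) / (\<gamma> * \<sigma>\<^sup>2) \<le> real k"
      unfolding k_def by (metis real_nat_ceiling_ge)
    show "0 \<le> 2 * \<gamma>\<^sup>2 * real d * R / (1 - 2 * \<gamma> * S)"
      using step_size(2) R_nonneg by simp
  qed (use step_size \<sigma>_pos eps_pos in \<open>auto simp: \<epsilon>0_def\<close>)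
  finally show ?thesis
    by (simp add: Let_def p_def S_def R_def \<sigma>_def \<gamma>_def \<epsilon>0_def k_def)
qed

end
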